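(* Let $\alpha\in(0,1]$, $\lambda_\alpha=\sqrt{\log(1/\alpha)/2}$, $p_1,\dots,p_m\in[0,1]$, and for $A\subseteq\{1,\dots,m\}$, $t\in[0,1]$, $\varphi_{A,t}=\mathbf 1\{i_A(t)>|A|t+\sqrt{|A|}\lambda_\alpha\}$, $\varphi_A=\max_{t\in[0,1]}\varphi_{A,t}$. Then $\hat m_0^{\mathrm{SC1}}:=\hat V^{\mathrm{SC1}}_\varphi(\{1,\dots,m\})$ satisfies $$\hat m_0^{\mathrm{SC1}}=\min_{t\in[0,1)}\Big\lfloor\Big(\frac{\lambda_\alpha}{2(1-t)}+\sqrt{\frac{\lambda_\alpha^2}{4(1-t)^2}+\frac{m-i(t)}{1-t}}\Big)^2\Big\rfloor\wedge m.$$
   Context: $i_A(t)=\#\{j\in A:p_j\le t\}$, $i(t)=i_{\{1,\dots,m\}}(t)$. For $S\subseteq\{1,\dots,m\}$: $\varphi_{S,n,t}=\min\{\varphi_{A,t}:A\subseteq\{1,\dots,m\},|A\cap S|=n\}$ and $\hat V^{\mathrm{SC1}}_\varphi(S)=\max\{n\in\{0,\dots,|S|\}:\max_{t\in[0,1]}\varphi_{S,n,t}=0\}$. *)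

theory Defs
  imports Complex_Main
begin

(* p-values are p :: nat => real, indexed by {1..m} *)

definition lambda_alpha :: "real \<Rightarrow> real" where
  "lambda_alpha \<alpha> = sqrt (ln (1 / \<alpha>) / 2)"

definition iA :: "(nat \<Rightarrow> real) \<Rightarrow> nat set \<Rightarrow> real \<Rightarrow> nat" where
  "iA p A t = card {j \<in> A. p j \<le> t}"

definition phiAt :: "real \<Rightarrow> (nat \<Rightarrow> real) \<Rightarrow> nat set \<Rightarrow> real \<Rightarrow> nat" where
  "phiAt lam p A t =
     (if real (iA p A t) > real (card A) * t + sqrt (real (card A)) * lam then 1 else 0)"

definition phiA :: "real \<Rightarrow> (nat \<Rightarrow> real) \<Rightarrow> nat set \<Rightarrow> nat" where
  "phiA lam p A = Max ((\<lambda>t. phiAt lam p A t) ` {0..1})"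

definition phiSnt :: "nat \<Rightarrow> real \<Rightarrow> (nat \<Rightarrow> real) \<Rightarrow> nat set \<Rightarrow> nat \<Rightarrow> real \<Rightarrow> nat" where
  "phiSnt m lam p S n t =
     Min {phiAt lam p A t | A. A \<subseteq> {1..m} \<and> card (A \<inter> S) = n}"

definition VSC1 :: "nat \<Rightarrow> real \<Rightarrow> (nat \<Rightarrow> real) \<Rightarrow> nat set \<Rightarrow> nat" where
  "VSC1 m lam p S =
     Max {n \<in> {0..card S}. Max ((\<lambda>t. phiSnt m lam p S n t) ` {0..1}) = 0}"

end

theory Submission
  imports Defs
begin

(* For S = {1..m} the constraint |A \<inter> S| = n just says |A| = n. Among n-subsets, i_A(t) is
   minimised by filling A first with the m - i(t) indices whose p-value exceeds t, so the minimum
   is (n - (m - i(t)))^+ and phi_{S,n,t} = 0 iff n - (m - i(t)) \<le> n t + sqrt n \<lambda>. This always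
   holds at t = 1; for t < 1 it is a quadratic inequality in sqrt n, solved exactly by the n up to
   the square of its positive root. So the admissible n are those below every floor bound, and the
   largest one is the minimum of these bounds, capped by m. *)

lemma iA_le_card: "finite A \<Longrightarrow> iA p A t \<le> card A"
  unfolding iA_def by (rule card_mono) auto

lemma card_above_eq: "finite A \<Longrightarrow> card {j \<in> A. \<not> p j \<le> t} = card A - iA p A t"
proof -
  assume "finite A"
  have "{j \<in> A. \<not> p j \<le> t} = A - {j \<in> A. p j \<le> t}" by blast
  then show ?thesis using \<open>finite A\<close> by (simp add: iA_def card_Diff_subset)
qed

lemma iA_subset_lower_bound:
  assumes "finite S" "A \<subseteq> S"
  shows "card A - (card S - iA p S t) \<le> iA p A t"
proof -
  have "card A - iA p A t = card {j \<in> A. \<not> p j \<le> t}"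
    using assms finite_subset by (metis card_above_eq)
  also have "\<dots> \<le> card {j \<in> S. \<not> p j \<le> t}"
    using assms by (intro card_mono) auto
  also have "\<dots> = card S - iA p S t" using assms(1) by (rule card_above_eq)
  finally show ?thesis by linarith
qed

lemma iA_subset_lower_bound_attained:
  assumes "finite S" "n \<le> card S"
  obtains A where "A \<subseteq> S" "card A = n" "iA p A t = n - (card S - iA p S t)"
proof -
  let ?below = "{j \<in> S. p j \<le> t}" and ?above = "{j \<in> S. \<not> p j \<le> t}"
  have above: "card ?above = card S - iA p S t" using assms(1) by (rule card_above_eq)
  have below: "card ?below = iA p S t" by (simp add: iA_def)
  show ?thesis
  proof (cases "n \<le> card ?above")
    case True
    then obtain A where A: "A \<subseteq> ?above" "card A = n" by (meson obtain_subset_with_card_n)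
    then have "{j \<in> A. p j \<le> t} = {}" by auto
    then have "iA p A t = 0" unfolding iA_def by (metis card.empty)
    then show ?thesis using that A True above by auto
  next
    case False
    then have "n - card ?above \<le> card ?below"
      using assms iA_le_card[of S p t] above below by linarith
    then obtain B where B: "B \<subseteq> ?below" "card B = n - card ?above"
      by (meson obtain_subset_with_card_n)
    have fin: "finite ?above" "finite B"
      using assms(1) rev_finite_subset[OF _ B(1)] by simp_all
    have "{j \<in> ?above \<union> B. p j \<le> t} = B" using B(1) by auto
    moreover have "card (?above \<union> B) = n"
      using B False fin by (subst card_Un_disjoint) auto
    ultimately show ?thesis using that[of "?above \<union> B"] B above by (auto simp: iA_def)
  qed
qed

lemma ex_subset_iA_le_iff:
  assumes "finite S" "n \<le> card S"
  shows "(\<exists>A \<subseteq> S. card A = n \<and> real (iA p A t) \<le> c) \<longleftrightarrow> real (n - (card S - iA p S t)) \<le> c"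
  using iA_subset_lower_bound[OF assms(1)] iA_subset_lower_bound_attained[OF assms]
  by (smt (verit) of_nat_le_iff)

lemma le_affine_sqrt_iff_le_root:
  fixes x t lam d :: real
  assumes "0 \<le> x" "0 \<le> t" "t < 1" "0 \<le> lam" "0 \<le> d"
  shows "x - d \<le> x * t + sqrt x * lam \<longleftrightarrow>
    x \<le> (lam / (2 * (1 - t)) + sqrt (lam\<^sup>2 / (4 * (1 - t)\<^sup>2) + d / (1 - t)))\<^sup>2"
proof -
  \<comment> \<open>With y = sqrt x the inequality reads a y^2 - lam y - d \<le> 0,
    whose roots q \<plusminus> s satisfy q - s \<le> 0 \<le> q + s.\<close>
  define a where "a = 1 - t"
  define y where "y = sqrt x"
  define q where "q = lam / (2 * a)"
  define s where "s = sqrt (q\<^sup>2 + d / a)"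
  have a: "0 < a" using assms(3) by (simp add: a_def)
  have y: "0 \<le> y" "y\<^sup>2 = x" using assms(1) by (simp_all add: y_def)
  have q: "0 \<le> q" using a assms(4) by (simp add: q_def)
  have s2: "s\<^sup>2 = q\<^sup>2 + d / a" using a assms(5) by (simp add: s_def)
  have qs: "q \<le> s" unfolding s_def using a assms(5) by (simp add: real_le_rsqrt)
  have factor: "x - d - (x * t + y * lam) = a * (y - (q + s)) * (y - (q - s))"
  proof -
    have "a * (y - (q + s)) * (y - (q - s)) = a * y\<^sup>2 - 2 * a * q * y + a * (q\<^sup>2 - s\<^sup>2)"
      by (simp add: algebra_simps power2_eq_square)
    also have "\<dots> = a * x - lam * y - d"
      using a y by (simp add: s2 q_def field_simps)
    finally show ?thesis by (simp add: a_def algebra_simps)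
  qed
  have "y - (q - s) \<ge> 0" using y q qs by linarith
  then have "x - d \<le> x * t + y * lam \<longleftrightarrow> y \<le> q + s"
    using factor a q qs by (smt (verit) mult_le_0_iff mult_pos_pos zero_less_mult_iff)
  also have "\<dots> \<longleftrightarrow> x \<le> (q + s)\<^sup>2"
    using q qs y by (metis add_nonneg_nonneg order_trans real_le_lsqrt sqrt_le_D y_def)
  also have "q + s = lam / (2 * (1 - t)) + sqrt (lam\<^sup>2 / (4 * (1 - t)\<^sup>2) + d / (1 - t))"
    by (simp add: s_def q_def a_def power_divide power2_eq_square algebra_simps)
  finally show ?thesis by (simp add: y_def)
qed

definition sc1_bound :: "nat \<Rightarrow> real \<Rightarrow> (nat \<Rightarrow> real) \<Rightarrow> real \<Rightarrow> int" where
  "sc1_bound m lam p t =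
     \<lfloor>(lam / (2 * (1 - t))
        + sqrt (lam\<^sup>2 / (4 * (1 - t)\<^sup>2) + (real m - real (iA p {1..m} t)) / (1 - t)))\<^sup>2\<rfloor>"

lemma sc1_bound_nonneg: "0 \<le> sc1_bound m lam p t"
  by (simp add: sc1_bound_def)

lemma phiSnt_full_eq:
  assumes "n \<le> m"
  shows "phiSnt m lam p {1..m} n t =
    (if \<exists>A \<subseteq> {1..m}. card A = n \<and> real (iA p A t) \<le> real n * t + sqrt (real n) * lam
     then 0 else 1)"
proof -
  define X where "X = {phiAt lam p A t | A. A \<subseteq> {1..m} \<and> card (A \<inter> {1..m}) = n}"
  have X01: "X \<subseteq> {0, 1}" unfolding X_def phiAt_def by auto
  then have "finite X" by (rule finite_subset) simp
  obtain A where "A \<subseteq> {1..m}" "card A = n"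
    using assms by (metis card_atLeastAtMost diff_Suc_1 obtain_subset_with_card_n)
  then have "X \<noteq> {}" unfolding X_def by (auto simp: Int_absorb2)
  have "Min X = (if 0 \<in> X then 0 else 1)"
  proof (cases "0 \<in> X")
    case True
    then show ?thesis using \<open>finite X\<close> by (simp add: Min_eqI)
  next
    case False
    then have "X = {1}" using X01 \<open>X \<noteq> {}\<close> by (auto simp: subset_insert dest: subset_singletonD)
    then show ?thesis by simp
  qed
  moreover have "0 \<in> X \<longleftrightarrow>
      (\<exists>A \<subseteq> {1..m}. card A = n \<and> real (iA p A t) \<le> real n * t + sqrt (real n) * lam)"
    unfolding X_def phiAt_def by (auto simp: Int_absorb2 not_less)
  ultimately show ?thesis by (simp add: phiSnt_def X_def)
qed

lemma phiSnt_full_eq_0_iff_le_sc1_bound: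
  assumes "n \<le> m" "0 \<le> lam" "0 \<le> t" "t < 1"
  shows "phiSnt m lam p {1..m} n t = 0 \<longleftrightarrow> int n \<le> sc1_bound m lam p t"
proof -
  have i: "iA p {1..m} t \<le> m" using iA_le_card[of "{1..m}" p t] by simp
  have nonneg: "0 \<le> real n * t + sqrt (real n) * lam" using assms(2,3) by simp
  have "phiSnt m lam p {1..m} n t = 0 \<longleftrightarrow>
      real (n - (m - iA p {1..m} t)) \<le> real n * t + sqrt (real n) * lam"
    unfolding phiSnt_full_eq[OF assms(1)] using ex_subset_iA_le_iff[of "{1..m}" n] assms(1) by simp
  also have "\<dots> \<longleftrightarrow> real n - (real m - real (iA p {1..m} t)) \<le> real n * t + sqrt (real n) * lam"
    using i nonneg by (cases "m - iA p {1..m} t \<le> n") (auto simp: of_nat_diff)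
  also have "\<dots> \<longleftrightarrow> int n \<le> sc1_bound m lam p t"
    using i assms(2-4) by (simp add: le_affine_sqrt_iff_le_root sc1_bound_def le_floor_iff)
  finally show ?thesis .
qed

lemma phiSnt_full_at_1:
  assumes "n \<le> m" "0 \<le> lam"
  shows "phiSnt m lam p {1..m} n 1 = 0"
proof -
  have "real (n - (m - iA p {1..m} 1)) \<le> real n" by simp
  moreover have "0 \<le> sqrt (real n) * lam" using assms(2) by simp
  ultimately have "real (n - (m - iA p {1..m} 1)) \<le> real n * 1 + sqrt (real n) * lam" by linarith
  then show ?thesis
    unfolding phiSnt_full_eq[OF assms(1)] using ex_subset_iA_le_iff[of "{1..m}" n] assms(1) by simp
qed

lemma Max_phiSnt_full_eq_0_iff:
  assumes "n \<le> m" "0 \<le> lam"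
  shows "Max ((\<lambda>t. phiSnt m lam p {1..m} n t) ` {0..1}) = 0 \<longleftrightarrow>
    (\<forall>t \<in> {0..<1}. int n \<le> sc1_bound m lam p t)"
proof -
  have "(\<lambda>t. phiSnt m lam p {1..m} n t) ` {0..1} \<subseteq> {0, 1}"
    unfolding phiSnt_full_eq[OF assms(1)] by auto
  then have "finite ((\<lambda>t. phiSnt m lam p {1..m} n t) ` {0..1})" by (rule finite_subset) simp
  then have "Max ((\<lambda>t. phiSnt m lam p {1..m} n t) ` {0..1}) = 0 \<longleftrightarrow>
      (\<forall>t \<in> {0..1}. phiSnt m lam p {1..m} n t = 0)"
    by (simp add: Max_le_iff flip: le_zero_eq)
  also have "\<dots> \<longleftrightarrow> (\<forall>t \<in> {0..<1}. int n \<le> sc1_bound m lam p t)"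
    using assms phiSnt_full_at_1 phiSnt_full_eq_0_iff_le_sc1_bound
    by (metis atLeastAtMost_iff atLeastLessThan_iff less_eq_real_def)
  finally show ?thesis .
qed

lemma VSC1_full_eq:
  assumes "0 \<le> lam"
  shows "VSC1 m lam p {1..m} = Max {n. n \<le> m \<and> (\<forall>t \<in> {0..<1}. int n \<le> sc1_bound m lam p t)}"
proof -
  have "{n \<in> {0..card {1..m}}. Max ((\<lambda>t. phiSnt m lam p {1..m} n t) ` {0..1}) = 0} =
      {n. n \<le> m \<and> (\<forall>t \<in> {0..<1}. int n \<le> sc1_bound m lam p t)}"
    using Max_phiSnt_full_eq_0_iff[OF _ assms] by auto
  then show ?thesis by (simp add: VSC1_def)
qed

lemma Max_le_Inf_image_nat:
  fixes f :: "'a \<Rightarrow> int"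
  assumes "T \<noteq> {}" "\<And>t. t \<in> T \<Longrightarrow> 0 \<le> f t"
  shows "int (Max {n. n \<le> m \<and> (\<forall>t \<in> T. int n \<le> f t)}) = min (Inf (f ` T)) (int m)"
proof -
  have bdd: "bdd_below (f ` T)" using assms(2) by (intro bdd_belowI[of _ 0]) auto
  have le_Inf: "int n \<le> Inf (f ` T) \<longleftrightarrow> (\<forall>t \<in> T. int n \<le> f t)" for n
    using assms(1) bdd by (simp add: le_cInf_iff)
  have "0 \<le> Inf (f ` T)" using le_Inf[of 0] assms(2) by simp
  then have "Max {n. n \<le> m \<and> (\<forall>t \<in> T. int n \<le> f t)} = nat (min (Inf (f ` T)) (int m))"
    by (intro Max_eqI) (auto simp: le_Inf [symmetric])
  then show ?thesis using \<open>0 \<le> Inf (f ` T)\<close> by simp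
qed

theorem mainTheorem11:
  fixes \<alpha> :: real and m :: nat and p :: "nat \<Rightarrow> real"
  assumes "0 < \<alpha>" and "\<alpha> \<le> 1"
    and "\<forall>j\<in>{1..m}. 0 \<le> p j \<and> p j \<le> 1"
  shows "int (VSC1 m (lambda_alpha \<alpha>) p {1..m}) =
    min (Inf { \<lfloor>(lambda_alpha \<alpha> / (2 * (1 - t))
                  + sqrt ((lambda_alpha \<alpha>)\<^sup>2 / (4 * (1 - t)\<^sup>2)
                          + (real m - real (iA p {1..m} t)) / (1 - t)))\<^sup>2\<rfloor>
              | t. t \<in> {0..<1} })
        (int m)"
proof -
  have lam: "0 \<le> lambda_alpha \<alpha>" using assms(1,2) by (simp add: lambda_alpha_def)
  have "int (VSC1 m (lambda_alpha \<alpha>) p {1..m}) =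
      min (Inf (sc1_bound m (lambda_alpha \<alpha>) p ` {0..<1})) (int m)"
    unfolding VSC1_full_eq[OF lam] by (rule Max_le_Inf_image_nat) (simp_all add: sc1_bound_nonneg)
  then show ?thesis unfolding Setcompr_eq_image sc1_bound_def .
qed

end
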